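(* Let $\mathbb{X}$ be a smooth reflexive real Banach space with the Kadets–Klee property and $\mathbb{Y}$ a smooth real Banach space. Let $T\in\mathbb{K}(\mathbb{X},\mathbb{Y})$ with $\|T\|=1$ be a smooth operator. Then $M_T=\{\pm x\}$ for some $x\in S_{\mathbb{X}}$. Moreover, let $H$ be the unique hyperspace of $\mathbb{X}$ such that $x\perp_B H$; if $(x,Tx)$ is a CPP with CPP constant $(r,\mu)$ and $0<\|T\|_H<\mu$, then $T$ is not an extreme contraction.
   Context: All Banach spaces are real and of dimension greater than $1$. $\mathbb{K}(\mathbb{X},\mathbb{Y})$ is the space of compact linear operators with operator norm. $T$ is a smooth operator if it is a smooth point of the unit sphere of $\mathbb{K}(\mathbb{X},\mathbb{Y})$, i.e., there is a unique norm one functional $f$ on $\mathbb{K}(\mathbb{X},\mathbb{Y})$ with $f(T)=\|T\|$. $\mathbb{X}$ has the Kadets–Klee property if $x_n\rightharpoonup x$ weakly and $\|x_n\|\to\|x\|$ imply $x_n\to x$ in norm. $M_T=\{x\in S_{\mathbb{X}}:\|Tx\|=\|T\|\}$. $x\perp_B y$ means $\|x+\lambda y\|\ge\|x\|$ for all real $\lambda$; $x\perp_B H$ means $x\perp_B h$ for all $h\in H$; $x^\perp=\{y:x\perp_By\}$. A hyperspace is a closed subspace of codimension one. $\|T\|_H=\sup\{\|Th\|:h\in H,\|h\|=1\}$. An extreme contraction is a norm one operator that is an extreme point of the closed unit ball of $\mathbb{L}(\mathbb{X},\mathbb{Y})$. $B(x,r)=\{u:\|u-x\|<r\}$. For $x\in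 S_{\mathbb{X}}$, $v\in S_{\mathbb{Y}}$, $(x,v)$ is a CPP with CPP constant $(r,\mu)$ ($r,\mu>0$) if for all $z\in x^\perp\cap S_{\mathbb{X}}$, all $w\in v^\perp\cap S_{\mathbb{Y}}$ and all $a,b\in\mathbb{R}$, $ax+bz\in B(x,r)\cap S_{\mathbb{X}}$ implies $\|av+b\mu w\|\le1$. *)

theory Defs
  imports "HOL-Analysis.Analysis"
begin

(* Real Banach spaces = types of class banach; dual space = 'a =>L real; L(X,Y) = 'a =>L 'b with operator norm. *)

definition dim_gt_one :: "'a::real_vector itself \<Rightarrow> bool" where
  "dim_gt_one _ \<longleftrightarrow> (\<exists>u v::'a. independent {u, v} \<and> u \<noteq> v)"

definition smooth_space :: "'a::real_normed_vector itself \<Rightarrow> bool" where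
  "smooth_space _ \<longleftrightarrow>
     (\<forall>x::'a. norm x = 1 \<longrightarrow> (\<exists>!f::'a \<Rightarrow>\<^sub>L real. norm f = 1 \<and> blinfun_apply f x = 1))"

definition reflexive_space :: "'a::real_normed_vector itself \<Rightarrow> bool" where
  "reflexive_space _ \<longleftrightarrow>
     (\<forall>\<phi>::('a \<Rightarrow>\<^sub>L real) \<Rightarrow>\<^sub>L real. \<exists>x::'a. \<forall>f. blinfun_apply \<phi> f = blinfun_apply f x)"

definition weakly_converges :: "(nat \<Rightarrow> 'a::real_normed_vector) \<Rightarrow> 'a \<Rightarrow> bool" where
  "weakly_converges xs x \<longleftrightarrow>
     (\<forall>f::'a \<Rightarrow>\<^sub>L real. (\<lambda>n. blinfun_apply f (xs n)) \<longlonglongrightarrow> blinfun_apply f x)"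

definition kadets_klee :: "'a::real_normed_vector itself \<Rightarrow> bool" where
  "kadets_klee _ \<longleftrightarrow>
     (\<forall>(xs::nat \<Rightarrow> 'a) x. weakly_converges xs x \<and> (\<lambda>n. norm (xs n)) \<longlonglongrightarrow> norm x
        \<longrightarrow> xs \<longlonglongrightarrow> x)"

definition compact_op :: "('a::real_normed_vector \<Rightarrow>\<^sub>L 'b::real_normed_vector) \<Rightarrow> bool" where
  "compact_op T \<longleftrightarrow> compact (closure (blinfun_apply T ` cball 0 1))"

text \<open>A norm-one (bounded linear) functional on the subspace K(X,Y) of compact
  operators, given as a function on L(X,Y) whose values outside K are irrelevant.\<close>
definition K_norm_one_functional ::
  "(('a::real_normed_vector \<Rightarrow>\<^sub>L 'b::real_normed_vector) \<Rightarrow> real) \<Rightarrow> bool" where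
  "K_norm_one_functional f \<longleftrightarrow>
     (\<forall>A B. compact_op A \<longrightarrow> compact_op B \<longrightarrow> f (A + B) = f A + f B) \<and>
     (\<forall>A c. compact_op A \<longrightarrow> f (c *\<^sub>R A) = c * f A) \<and>
     (\<exists>C. \<forall>A. compact_op A \<longrightarrow> \<bar>f A\<bar> \<le> C * norm A) \<and>
     Sup {\<bar>f A\<bar> | A. compact_op A \<and> norm A = 1} = 1"

definition smooth_operator :: "('a::real_normed_vector \<Rightarrow>\<^sub>L 'b::real_normed_vector) \<Rightarrow> bool" where
  "smooth_operator T \<longleftrightarrow> compact_op T \<and> norm T = 1 \<and>
     (\<exists>f. K_norm_one_functional f \<and> f T = norm T) \<and>
     (\<forall>f g. K_norm_one_functional f \<and> f T = norm T \<and> K_norm_one_functional g \<and> g T = norm T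
        \<longrightarrow> (\<forall>A. compact_op A \<longrightarrow> f A = g A))"

definition norm_attainment_set :: "('a::real_normed_vector \<Rightarrow>\<^sub>L 'b::real_normed_vector) \<Rightarrow> 'a set" where
  "norm_attainment_set T = {x. norm x = 1 \<and> norm (blinfun_apply T x) = norm T}"

definition bj_orth :: "'a::real_normed_vector \<Rightarrow> 'a \<Rightarrow> bool" where
  "bj_orth x y \<longleftrightarrow> (\<forall>t::real. norm (x + t *\<^sub>R y) \<ge> norm x)"

definition hyperspace :: "'a::real_normed_vector set \<Rightarrow> bool" where
  "hyperspace H \<longleftrightarrow> subspace H \<and> closed H \<and>
     (\<exists>v. v \<notin> H \<and> (\<forall>y. \<exists>h\<in>H. \<exists>t::real. y = h + t *\<^sub>R v))"

definition norm_on :: "'a::real_normed_vector set \<Rightarrow> ('a \<Rightarrow>\<^sub>L 'b::real_normed_vector) \<Rightarrow> real" where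
  "norm_on H T = Sup {norm (blinfun_apply T h) | h. h \<in> H \<and> norm h = 1}"

definition extreme_contraction :: "('a::real_normed_vector \<Rightarrow>\<^sub>L 'b::real_normed_vector) \<Rightarrow> bool" where
  "extreme_contraction T \<longleftrightarrow> norm T = 1 \<and> T extreme_point_of cball 0 1"

definition CPP :: "'a::real_normed_vector \<Rightarrow> 'b::real_normed_vector \<Rightarrow> real \<Rightarrow> real \<Rightarrow> bool" where
  "CPP x v r \<mu> \<longleftrightarrow> norm x = 1 \<and> norm v = 1 \<and> r > 0 \<and> \<mu> > 0 \<and>
     (\<forall>z w (a::real) (b::real). norm z = 1 \<and> bj_orth x z \<and> norm w = 1 \<and> bj_orth v w \<and>
        dist (a *\<^sub>R x + b *\<^sub>R z) x < r \<and> norm (a *\<^sub>R x + b *\<^sub>R z) = 1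
        \<longrightarrow> norm (a *\<^sub>R v + (b * \<mu>) *\<^sub>R w) \<le> 1)"

end

theory Submission
  imports Defs
begin

text \<open>Reflexivity makes bounded sequences weakly sequentially compact (Tychonoff on the
  dual; smoothness supplies the norming functionals that Hahn--Banach would give), so a
  compact operator \<open>T\<close> of norm one attains its norm at some \<open>x\<close>. If it also attains it at
  \<open>y\<close>, then \<open>A \<mapsto> g (A x)\<close> and \<open>A \<mapsto> g' (A y)\<close>, with \<open>g\<close>, \<open>g'\<close> supporting \<open>T x\<close> and
  \<open>T y\<close>, are norm-one functionals on \<open>K(X,Y)\<close> supporting \<open>T\<close>; smoothness of \<open>T\<close> makes
  them equal, and testing them on rank-one operators gives \<open>y = \<plusminus>x\<close>. Together with the
  Kadets--Klee property this yields a gap: \<open>\<parallel>T y\<parallel> \<le> 1 - \<eta>\<close> for unit vectors \<open>y\<close> away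
  from \<open>\<plusminus>x\<close>.

  The hyperspace Birkhoff--James orthogonal to \<open>x\<close> is the kernel of the support
  functional \<open>f\<close> at \<open>x\<close>. With \<open>P = I - x \<otimes> f\<close>, the operators \<open>T \<plusminus> \<delta> T P\<close> are still
  contractions for small \<open>\<delta>\<close>: near \<open>\<plusminus>x\<close> by the CPP, since \<open>T P\<close> takes values orthogonal
  to \<open>T x\<close> of size at most \<open>\<parallel>T\<parallel>\<^sub>H < \<mu>\<close>, and away from \<open>\<plusminus>x\<close> by the gap. As \<open>T P \<noteq> 0\<close>,
  \<open>T\<close> is the midpoint of two distinct contractions.\<close>

section \<open>Functionals on smooth spaces\<close>

lemma smooth_space_support_functional:
  fixes x :: "'a::real_normed_vector"
  assumes "smooth_space TYPE('a)" "norm x = 1"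
  obtains f :: "'a \<Rightarrow>\<^sub>L real" where "norm f = 1" "f x = 1"
  using assms unfolding smooth_space_def by blast

lemma smooth_space_support_functional_unique:
  fixes x :: "'a::real_normed_vector" and f g :: "'a \<Rightarrow>\<^sub>L real"
  assumes "smooth_space TYPE('a)" "norm x = 1"
    and "norm f = 1" "f x = 1" "norm g = 1" "g x = 1"
  shows "f = g"
  using assms unfolding smooth_space_def by metis

lemma smooth_space_norming_functional:
  fixes x :: "'a::real_normed_vector"
  assumes "smooth_space TYPE('a)"
  obtains f :: "'a \<Rightarrow>\<^sub>L real" where "norm f \<le> 1" "f x = norm x"
proof (cases "x = 0")
  case False
  then obtain f :: "'a \<Rightarrow>\<^sub>L real" where "norm f = 1" "f (x /\<^sub>R norm x) = 1"
    using smooth_space_support_functional[OF assms, of "x /\<^sub>R norm x"] by auto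
  with False show ?thesis
    using that[of f] by (simp add: blinfun.scaleR_right field_simps)
qed (use that[of 0] in simp)

lemma smooth_space_functionals_separate:
  fixes u v :: "'a::real_normed_vector"
  assumes "smooth_space TYPE('a)" "\<And>f::'a \<Rightarrow>\<^sub>L real. f u = f v"
  shows "u = v"
proof -
  obtain f :: "'a \<Rightarrow>\<^sub>L real" where "f (u - v) = norm (u - v)"
    using smooth_space_norming_functional[OF assms(1)] by blast
  then show ?thesis
    using assms(2)[of f] by (simp add: blinfun.diff_right)
qed

lemma norm_blinfun_apply_le_norm:
  fixes A :: "'a::real_normed_vector \<Rightarrow>\<^sub>L 'b::real_normed_vector"
  assumes "norm y \<le> 1"
  shows "norm (A y) \<le> norm A"
  using norm_blinfun[of A y] assms by (metis mult_left_le norm_ge_zero order_trans)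

lemma abs_blinfun_apply_le:
  fixes f :: "'a::real_normed_vector \<Rightarrow>\<^sub>L real"
  assumes "norm f \<le> 1"
  shows "\<bar>f y\<bar> \<le> norm y"
proof -
  have "\<bar>f y\<bar> \<le> norm f * norm y"
    using norm_blinfun[of f y] by simp
  also have "\<dots> \<le> norm y"
    using assms by (simp add: mult_left_le_one_le)
  finally show ?thesis .
qed

lemma norm_blinfun_le_if_unit_bound:
  fixes A :: "'a::real_normed_vector \<Rightarrow>\<^sub>L 'b::real_normed_vector"
  assumes "0 \<le> c" "\<And>y. norm y = 1 \<Longrightarrow> norm (A y) \<le> c"
  shows "norm A \<le> c"
proof (rule norm_blinfun_bound[OF assms(1)])
  fix y
  show "norm (A y) \<le> c * norm y"
  proof (cases "y = 0")
    case False
    then have "norm (A (y /\<^sub>R norm y)) \<le> c"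
      by (intro assms(2)) simp
    with False show ?thesis
      by (simp add: blinfun.scaleR_right field_simps)
  qed simp
qed

lemma bj_orth_if_norming_functional:
  fixes f :: "'a::real_normed_vector \<Rightarrow>\<^sub>L real"
  assumes "norm f \<le> 1" "f v = norm v" "f w = 0"
  shows "bj_orth v w"
  unfolding bj_orth_def
proof
  fix t :: real
  have "f (v + t *\<^sub>R w) = norm v"
    using assms by (simp add: blinfun.add_right blinfun.scaleR_right)
  then show "norm v \<le> norm (v + t *\<^sub>R w)"
    using abs_blinfun_apply_le[OF assms(1), of "v + t *\<^sub>R w"] by simp
qed

section \<open>Weak sequential compactness in reflexive spaces\<close>

text \<open>Only this consequence of \<open>x\<close> being a weak cluster point of \<open>y\<close> is ever used: every
  functional that converges along \<open>y\<close> converges to its value at \<open>x\<close>.\<close>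

definition weakly_clusters_at :: "(nat \<Rightarrow> 'a::real_normed_vector) \<Rightarrow> 'a \<Rightarrow> bool" where
  "weakly_clusters_at y x \<longleftrightarrow> (\<forall>(g::'a \<Rightarrow>\<^sub>L real) c. (\<lambda>n. g (y n)) \<longlonglongrightarrow> c \<longrightarrow> g x = c)"

lemma cluster_point_in_closed:
  assumes "inf (nhds p) (filtermap F sequentially) \<noteq> bot" "closed C"
    and "eventually (\<lambda>n. F n \<in> C) sequentially"
  shows "p \<in> C"
proof (rule ccontr)
  assume "p \<notin> C"
  then have "eventually (\<lambda>z. z \<in> - C) (nhds p)"
    using assms(2) by (intro eventually_nhds_in_open) auto
  moreover have "eventually (\<lambda>z. z \<in> C) (filtermap F sequentially)"
    using assms(3) by (simp add: eventually_filtermap)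
  ultimately have "eventually (\<lambda>_. False) (inf (nhds p) (filtermap F sequentially))"
    unfolding eventually_inf by blast
  with assms(1) show False
    by (simp add: eventually_False)
qed

lemma cluster_point_coordinate_limit:
  fixes F :: "nat \<Rightarrow> 'i \<Rightarrow> real"
  assumes "inf (nhds \<Phi>) (filtermap F sequentially) \<noteq> bot" "(\<lambda>n. F n i) \<longlonglongrightarrow> c"
  shows "\<Phi> i = c"
proof -
  have "\<bar>\<Phi> i - c\<bar> \<le> e" if "e > 0" for e
  proof (rule cluster_point_in_closed[OF assms(1), of "{\<Psi>. \<bar>\<Psi> i - c\<bar> \<le> e}", simplified])
    show "closed {\<Psi>. \<bar>\<Psi> i - c\<bar> \<le> e}"
      by (simp add: closed_Collect_le continuous_intros)
    show "\<forall>\<^sub>F n in sequentially. \<bar>F n i - c\<bar> \<le> e"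
      using assms(2) \<open>e > 0\<close> unfolding LIMSEQ_def dist_real_def
      by (fastforce simp: eventually_sequentially intro: less_imp_le)
  qed
  then show ?thesis
    by (metis abs_le_zero_iff dense_ge eq_iff_diff_eq_0)
qed

lemma reflexive_weak_cluster_point:
  fixes y :: "nat \<Rightarrow> 'a::real_normed_vector"
  assumes "reflexive_space TYPE('a)" "smooth_space TYPE('a)" "\<And>n. norm (y n) \<le> 1"
  obtains x where "norm x \<le> 1" "weakly_clusters_at y x"
proof -
  define F where "F n = (\<lambda>g::'a \<Rightarrow>\<^sub>L real. g (y n))" for n
  define K where "K = (\<Pi>\<^sub>E g\<in>(UNIV :: ('a \<Rightarrow>\<^sub>L real) set). {-norm g..norm g})"
  have F_bound: "\<bar>F n g\<bar> \<le> norm g" for n g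
    using norm_blinfun_apply_le_norm[of "y n" g] assms(3)[of n] by (simp add: F_def)
  have "compactin (product_topology (\<lambda>_. euclidean) UNIV) K"
    unfolding K_def by (subst compactin_PiE) auto
  then have "compact K"
    by (simp add: euclidean_product_topology)
  moreover have "eventually (\<lambda>\<Psi>. \<Psi> \<in> K) (filtermap F sequentially)"
    using F_bound by (simp add: eventually_filtermap K_def PiE_iff abs_le_iff minus_le_iff)
  ultimately obtain \<Phi> where \<Phi>: "inf (nhds \<Phi>) (filtermap F sequentially) \<noteq> bot"
    unfolding compact_filter by (metis filtermap_bot_iff sequentially_bot)
  have lin: "\<Phi> (a *\<^sub>R g + b *\<^sub>R h) = a * \<Phi> g + b * \<Phi> h" for a b g h
    using cluster_point_in_closed[OF \<Phi>, of "{\<Psi>. \<Psi> (a *\<^sub>R g + b *\<^sub>R h) = a * \<Psi> g + b * \<Psi> h}"]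
    by (simp add: F_def closed_Collect_eq continuous_intros blinfun.add_left blinfun.scaleR_left)
  have bound: "\<bar>\<Phi> g\<bar> \<le> norm g" for g
    using cluster_point_in_closed[OF \<Phi>, of "{\<Psi>. \<bar>\<Psi> g\<bar> \<le> norm g}"] F_bound
    by (simp add: closed_Collect_le continuous_intros)
  have "bounded_linear \<Phi>"
    by (rule bounded_linear_intro[of _ 1]) (use lin[of 1 _ 1] lin[of _ _ 0] bound in auto)
  then obtain x where x: "\<And>g. \<Phi> g = g x"
    using assms(1) unfolding reflexive_space_def by (metis bounded_linear_Blinfun_apply)
  obtain f :: "'a \<Rightarrow>\<^sub>L real" where "norm f \<le> 1" "f x = norm x"
    using smooth_space_norming_functional[OF assms(2)] .
  then have "norm x \<le> 1"
    using bound[of f] x[of f] by simp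
  moreover have "g x = c" if "(\<lambda>n. g (y n)) \<longlonglongrightarrow> c" for g :: "'a \<Rightarrow>\<^sub>L real" and c
    using cluster_point_coordinate_limit[OF \<Phi>, of g c] that x[of g] by (simp add: F_def)
  ultimately show ?thesis
    using that unfolding weakly_clusters_at_def by blast
qed

lemma LIMSEQ_if_subseq_limits_unique:
  fixes X :: "nat \<Rightarrow> real"
  assumes "bounded (range X)" "\<And>r c. strict_mono r \<Longrightarrow> (X \<circ> r) \<longlonglongrightarrow> c \<Longrightarrow> c = l"
  shows "X \<longlonglongrightarrow> l"
proof (rule ccontr)
  assume "\<not> X \<longlonglongrightarrow> l"
  then obtain e where e: "e > 0" "\<forall>N. \<exists>n\<ge>N. e \<le> \<bar>X n - l\<bar>"
    unfolding LIMSEQ_def dist_real_def by (meson not_le)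
  then have "infinite {n. e \<le> \<bar>X n - l\<bar>}"
    by (simp add: infinite_nat_iff_unbounded_le)
  then obtain r :: "nat \<Rightarrow> nat" where r: "strict_mono r" "\<And>n. e \<le> \<bar>X (r n) - l\<bar>"
    using infinite_enumerate by blast
  have "bounded (range (X \<circ> r))"
    using assms(1) by (rule bounded_subset) auto
  then obtain r' c where r': "strict_mono r'" "((X \<circ> r) \<circ> r') \<longlonglongrightarrow> c"
    using bounded_imp_convergent_subsequence by blast
  have "c = l"
    using assms(2)[of "r \<circ> r'"] r(1) r' by (simp add: strict_mono_o o_assoc)
  moreover have "e \<le> \<bar>c - l\<bar>"
    using r' r(2) by (intro LIMSEQ_le_const[of "\<lambda>n. \<bar>X (r (r' n)) - l\<bar>"])
      (auto intro!: tendsto_intros simp: o_def)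
  ultimately show False
    using e(1) by simp
qed

lemma weakly_converges_if_unique_cluster:
  fixes y :: "nat \<Rightarrow> 'a::real_normed_vector"
  assumes "reflexive_space TYPE('a)" "smooth_space TYPE('a)" "\<And>n. norm (y n) \<le> 1"
    and "\<And>r x'. strict_mono r \<Longrightarrow> norm x' \<le> 1 \<Longrightarrow> weakly_clusters_at (\<lambda>n. y (r n)) x' \<Longrightarrow> x' = x"
  shows "weakly_converges y x"
  unfolding weakly_converges_def
proof
  fix \<phi> :: "'a \<Rightarrow>\<^sub>L real"
  show "(\<lambda>n. \<phi> (y n)) \<longlonglongrightarrow> \<phi> x"
  proof (rule LIMSEQ_if_subseq_limits_unique)
    have "norm (\<phi> (y n)) \<le> norm \<phi>" for n
      using norm_blinfun_apply_le_norm assms(3) by blast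
    then show "bounded (range (\<lambda>n. \<phi> (y n)))"
      by (auto simp: bounded_iff)
  next
    fix r c
    assume r: "strict_mono r" and lim: "((\<lambda>n. \<phi> (y n)) \<circ> r) \<longlonglongrightarrow> c"
    obtain x' where "norm x' \<le> 1" "weakly_clusters_at (\<lambda>n. y (r n)) x'"
      using reflexive_weak_cluster_point[OF assms(1,2), of "\<lambda>n. y (r n)"] assms(3) by blast
    then show "c = \<phi> x"
      using assms(4)[OF r] lim unfolding weakly_clusters_at_def o_def by metis
  qed
qed

section \<open>Compact operators\<close>

lemma compact_opI:
  fixes T :: "'a::real_normed_vector \<Rightarrow>\<^sub>L 'b::real_normed_vector"
  assumes "compact K" "T ` cball 0 1 \<subseteq> K"
  shows "compact_op T"
  unfolding compact_op_def
  using assms closure_minimal[OF assms(2) compact_imp_closed[OF assms(1)]]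
  by (metis closed_closure compact_Int_closed inf.absorb_iff2)

lemma compact_op_rank_one: "compact_op (blinfun_scaleR_left v o\<^sub>L \<phi>)"
proof (rule compact_opI)
  show "compact ((\<lambda>t. t *\<^sub>R v) ` {-norm \<phi>..norm \<phi>})"
    by (intro compact_continuous_image continuous_intros) auto
  show "(blinfun_scaleR_left v o\<^sub>L \<phi>) ` cball 0 1 \<subseteq> (\<lambda>t. t *\<^sub>R v) ` {-norm \<phi>..norm \<phi>}"
  proof clarsimp
    fix z :: 'a
    assume "norm z \<le> 1"
    then have "\<bar>\<phi> z\<bar> \<le> norm \<phi>"
      using norm_blinfun_apply_le_norm[of z \<phi>] by simp
    then show "\<phi> z *\<^sub>R v \<in> (\<lambda>t. t *\<^sub>R v) ` {-norm \<phi>..norm \<phi>}"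
      by (auto simp: abs_le_iff)
  qed
qed

lemma compact_op_convergent_subseq:
  fixes T :: "'a::real_normed_vector \<Rightarrow>\<^sub>L 'b::real_normed_vector" and y :: "nat \<Rightarrow> 'a"
  assumes "compact_op T" "\<And>n. norm (y n) \<le> 1"
  obtains r u where "strict_mono r" "(\<lambda>n. T (y (r n))) \<longlonglongrightarrow> u"
proof -
  have "\<forall>n. T (y n) \<in> closure (T ` cball 0 1)"
    using assms(2) closure_subset by fastforce
  from seq_compactE[OF compact_imp_seq_compact[OF assms(1)[unfolded compact_op_def]] this]
  obtain r u where "strict_mono r" "((\<lambda>n. T (y n)) \<circ> r) \<longlonglongrightarrow> u"
    by blast
  with that show ?thesis
    by (simp add: o_def)
qed

lemma blinfun_apply_weak_cluster:
  fixes T :: "'a::real_normed_vector \<Rightarrow>\<^sub>L 'b::real_normed_vector"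
  assumes "smooth_space TYPE('b)" "weakly_clusters_at y x" "(\<lambda>n. T (y n)) \<longlonglongrightarrow> u"
  shows "T x = u"
proof (rule smooth_space_functionals_separate[OF assms(1)])
  fix g :: "'b \<Rightarrow>\<^sub>L real"
  have "(\<lambda>n. (g o\<^sub>L T) (y n)) \<longlonglongrightarrow> g u"
    using bounded_linear.tendsto[OF blinfun.bounded_linear_right assms(3)] by simp
  then show "g (T x) = g u"
    using assms(2) unfolding weakly_clusters_at_def by (metis blinfun_apply_blinfun_compose)
qed

lemma tendsto_one_if_nearly_norming:
  fixes T :: "'a::real_normed_vector \<Rightarrow>\<^sub>L 'b::real_normed_vector" and y :: "nat \<Rightarrow> 'a"
  assumes "norm T = 1" "\<And>n. norm (y n) = 1" "\<And>n. 1 - inverse (real (Suc n)) < norm (T (y n))"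
  shows "(\<lambda>n. norm (T (y n))) \<longlonglongrightarrow> 1"
proof (rule tendsto_sandwich[of "\<lambda>n. 1 - inverse (real (Suc n))" _ _ "\<lambda>_. 1"])
  show "\<forall>\<^sub>F n in sequentially. 1 - inverse (real (Suc n)) \<le> norm (T (y n))"
    using assms(3) by (simp add: less_imp_le)
  have "norm (T (y n)) \<le> 1" for n
    using norm_blinfun_apply_le_norm[of "y n" T] assms(1,2) by simp
  then show "\<forall>\<^sub>F n in sequentially. norm (T (y n)) \<le> 1"
    by simp
  show "(\<lambda>n. 1 - inverse (real (Suc n))) \<longlonglongrightarrow> 1"
    using tendsto_diff[OF tendsto_const LIMSEQ_inverse_real_of_nat, of 1] by simp
qed simp

lemma norming_sequence:
  fixes T :: "'a::real_normed_vector \<Rightarrow>\<^sub>L 'b::real_normed_vector"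
  assumes "norm T = 1"
  obtains y where "\<And>n. norm (y n) = 1" "(\<lambda>n. norm (T (y n))) \<longlonglongrightarrow> 1"
proof -
  have "\<exists>y. norm y = 1 \<and> 1 - inverse (real (Suc n)) < norm (T y)" for n
  proof (rule ccontr)
    assume "\<not> ?thesis"
    moreover have "0 \<le> 1 - inverse (real (Suc n))"
      by (simp add: inverse_le_1_iff)
    ultimately have "norm T \<le> 1 - inverse (real (Suc n))"
      using norm_blinfun_le_if_unit_bound by (metis not_less)
    with assms show False
      by simp
  qed
  then obtain y where y: "\<And>n. norm (y n) = 1" "\<And>n. 1 - inverse (real (Suc n)) < norm (T (y n))"
    by metis
  show ?thesis
    by (rule that[OF y(1) tendsto_one_if_nearly_norming[OF assms y]])
qed

lemma compact_op_maximizing_subseq: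
  fixes T :: "'a::real_normed_vector \<Rightarrow>\<^sub>L 'b::real_normed_vector" and y :: "nat \<Rightarrow> 'a"
  assumes "reflexive_space TYPE('a)" "smooth_space TYPE('a)" "smooth_space TYPE('b)"
    and "compact_op T" "norm T = 1"
    and "\<And>n. norm (y n) = 1" "(\<lambda>n. norm (T (y n))) \<longlonglongrightarrow> 1"
  obtains r x where "strict_mono r" "norm x = 1" "norm (T x) = 1"
    "(\<lambda>n. T (y (r n))) \<longlonglongrightarrow> T x" "weakly_clusters_at (\<lambda>n. y (r n)) x"
proof -
  obtain r u where r: "strict_mono r" and lim: "(\<lambda>n. T (y (r n))) \<longlonglongrightarrow> u"
    using compact_op_convergent_subseq[OF assms(4), of y] assms(6) by auto
  have "(\<lambda>n. norm (T (y (r n)))) \<longlonglongrightarrow> 1"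
    using LIMSEQ_subseq_LIMSEQ[OF assms(7) r] by (simp add: o_def)
  then have u: "norm u = 1"
    using tendsto_norm[OF lim] LIMSEQ_unique by blast
  obtain x where x: "norm x \<le> 1" "weakly_clusters_at (\<lambda>n. y (r n)) x"
    using reflexive_weak_cluster_point[OF assms(1,2), of "\<lambda>n. y (r n)"] assms(6) by auto
  have Tx: "T x = u"
    using blinfun_apply_weak_cluster[OF assms(3) x(2) lim] .
  have "norm x = 1"
    using norm_blinfun[of T x] assms(5) x(1) Tx u by simp
  with r x(2) lim Tx u show ?thesis
    using that by blast
qed

lemma compact_op_attains_norm:
  fixes T :: "'a::real_normed_vector \<Rightarrow>\<^sub>L 'b::real_normed_vector"
  assumes "reflexive_space TYPE('a)" "smooth_space TYPE('a)" "smooth_space TYPE('b)"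
    and "compact_op T" "norm T = 1"
  obtains x where "norm x = 1" "norm (T x) = 1"
proof -
  obtain y where "\<And>n. norm (y n) = 1" "(\<lambda>n. norm (T (y n))) \<longlonglongrightarrow> 1"
    using norming_sequence[OF assms(5)] by blast
  from compact_op_maximizing_subseq[OF assms this] that show ?thesis
    by metis
qed

section \<open>The norm attainment set of a smooth compact operator\<close>

lemma K_norm_one_functional_evaluation:
  fixes T :: "'a::real_normed_vector \<Rightarrow>\<^sub>L 'b::real_normed_vector" and g :: "'b \<Rightarrow>\<^sub>L real"
  assumes "norm g = 1" "norm z = 1" "compact_op T" "norm T = 1" "g (T z) = 1"
  shows "K_norm_one_functional (\<lambda>A::'a \<Rightarrow>\<^sub>L 'b. g (A z))"
proof -
  have bound: "\<bar>g (A z)\<bar> \<le> norm A" for A :: "'a \<Rightarrow>\<^sub>L 'b"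
    using abs_blinfun_apply_le[of g "A z"] norm_blinfun_apply_le_norm[of z A] assms(1,2) by simp
  have "Sup {\<bar>g (blinfun_apply A z)\<bar> | A. compact_op A \<and> norm A = 1} = 1"
  proof (rule cSup_eq_maximum)
    show "1 \<in> {\<bar>g (blinfun_apply A z)\<bar> | A. compact_op A \<and> norm A = 1}"
      using assms(3-5) by force
    show "c \<le> 1" if "c \<in> {\<bar>g (blinfun_apply A z)\<bar> | A. compact_op A \<and> norm A = 1}" for c
    proof -
      from that obtain A :: "'a \<Rightarrow>\<^sub>L 'b" where "c = \<bar>g (A z)\<bar>" "norm A = 1"
        by blast
      then show ?thesis
        using bound[of A] by simp
    qed
  qed
  moreover have "\<exists>C. \<forall>A. compact_op A \<longrightarrow> \<bar>g (blinfun_apply A z)\<bar> \<le> C * norm A"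
    using bound by (intro exI[of _ 1]) simp
  ultimately show ?thesis
    unfolding K_norm_one_functional_def
    by (simp add: blinfun.add_left blinfun.add_right blinfun.scaleR_left blinfun.scaleR_right)
qed

lemma smooth_operator_norm_attainment_pm:
  fixes T :: "'a::real_normed_vector \<Rightarrow>\<^sub>L 'b::real_normed_vector"
  assumes "smooth_space TYPE('a)" "smooth_space TYPE('b)" "smooth_operator T"
    and x: "norm x = 1" "norm (T x) = 1" and y: "norm y = 1" "norm (T y) = 1"
  shows "y = x \<or> y = - x"
proof -
  have T: "compact_op T" "norm T = 1"
    using assms(3) unfolding smooth_operator_def by auto
  obtain g1 :: "'b \<Rightarrow>\<^sub>L real" where g1: "norm g1 = 1" "g1 (T x) = 1"
    using smooth_space_support_functional[OF assms(2) x(2)] .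
  obtain g2 :: "'b \<Rightarrow>\<^sub>L real" where g2: "norm g2 = 1" "g2 (T y) = 1"
    using smooth_space_support_functional[OF assms(2) y(2)] .
  have "g1 (A x) = g2 (A y)" if "compact_op A" for A
    using assms(3) K_norm_one_functional_evaluation[OF g1(1) x(1) T g1(2)]
      K_norm_one_functional_evaluation[OF g2(1) y(1) T g2(2)] g1(2) g2(2) T(2) that
    unfolding smooth_operator_def by metis
  from this[OF compact_op_rank_one, of "T x"]
  have "\<phi> x = \<phi> (g2 (T x) *\<^sub>R y)" for \<phi> :: "'a \<Rightarrow>\<^sub>L real"
    by (simp add: g1(2) blinfun.scaleR_right)
  then have xy: "x = g2 (T x) *\<^sub>R y"
    by (rule smooth_space_functionals_separate[OF assms(1)])
  then have "\<bar>g2 (T x)\<bar> = 1"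
    using x(1) y(1) by (metis mult.right_neutral norm_scaleR)
  with xy show ?thesis
    by (auto simp: abs_if split: if_splits)
qed

lemma smooth_operator_norm_attainment_set:
  fixes T :: "'a::real_normed_vector \<Rightarrow>\<^sub>L 'b::real_normed_vector"
  assumes "smooth_space TYPE('a)" "smooth_space TYPE('b)" "smooth_operator T"
    and "norm x = 1" "norm (T x) = 1"
  shows "norm_attainment_set T = {x, - x}"
  using smooth_operator_norm_attainment_pm[OF assms] assms(3-5)
  by (auto simp: norm_attainment_set_def smooth_operator_def blinfun.minus_right)

lemma smooth_operator_maximizing_subseq_converges:
  fixes T :: "'a::real_normed_vector \<Rightarrow>\<^sub>L 'b::real_normed_vector" and y :: "nat \<Rightarrow> 'a"
  assumes "reflexive_space TYPE('a)" "smooth_space TYPE('a)" "smooth_space TYPE('b)"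
    and "kadets_klee TYPE('a)" "smooth_operator T"
    and "\<And>n. norm (y n) = 1" "(\<lambda>n. norm (T (y n))) \<longlonglongrightarrow> 1"
  obtains r x where "strict_mono r" "norm x = 1" "norm (T x) = 1" "(\<lambda>n. y (r n)) \<longlonglongrightarrow> x"
proof -
  have T: "compact_op T" "norm T = 1"
    using assms(5) unfolding smooth_operator_def by auto
  obtain r x where r: "strict_mono r" and x: "norm x = 1" "norm (T x) = 1"
    and lim: "(\<lambda>n. T (y (r n))) \<longlonglongrightarrow> T x"
    using compact_op_maximizing_subseq[OF assms(1-3) T assms(6,7)] by blast
  have "weakly_converges (\<lambda>n. y (r n)) x"
  proof (rule weakly_converges_if_unique_cluster[OF assms(1,2)])
    fix r' x'
    assume r': "strict_mono r'" and x': "norm x' \<le> 1" "weakly_clusters_at (\<lambda>n. y (r (r' n))) x'"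
    have Tx': "T x' = T x"
      using blinfun_apply_weak_cluster[OF assms(3) x'(2)] LIMSEQ_subseq_LIMSEQ[OF lim r']
      by (simp add: o_def)
    then have "norm x' = 1"
      using norm_blinfun[of T x'] T(2) x' x by simp
    then have "x' = x \<or> x' = - x"
      using smooth_operator_norm_attainment_pm[OF assms(2,3,5) x] Tx' x(2) by simp
    moreover have "x' \<noteq> - x"
    proof
      assume "x' = - x"
      then have "- T x = T x"
        using Tx' by (simp add: blinfun.minus_right)
      then have "(2::real) *\<^sub>R T x = 0"
        by (metis add.right_inverse scaleR_2)
      with x(2) show False
        by simp
    qed
    ultimately show "x' = x"
      by blast
  qed (use assms(6) in simp)
  then have "(\<lambda>n. y (r n)) \<longlonglongrightarrow> x"
    using assms(4,6) x(1) unfolding kadets_klee_def by simp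
  with r x show ?thesis
    using that by blast
qed

lemma smooth_operator_norm_gap:
  fixes T :: "'a::real_normed_vector \<Rightarrow>\<^sub>L 'b::real_normed_vector"
  assumes "reflexive_space TYPE('a)" "smooth_space TYPE('a)" "smooth_space TYPE('b)"
    and "kadets_klee TYPE('a)" "smooth_operator T"
    and x: "norm x = 1" "norm (T x) = 1" and "\<rho> > 0"
  obtains \<eta> where "\<eta> > 0"
    "\<And>y. norm y = 1 \<Longrightarrow> \<rho> \<le> dist y x \<Longrightarrow> \<rho> \<le> dist y (- x) \<Longrightarrow> norm (T y) \<le> 1 - \<eta>"
proof (rule ccontr)
  assume "\<not> thesis"
  then have "\<exists>y. (norm y = 1 \<and> \<rho> \<le> dist y x \<and> \<rho> \<le> dist y (- x)) \<and>
      1 - inverse (real (Suc n)) < norm (T y)" for n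
    using that[of "inverse (real (Suc n))"] by (meson inverse_positive_iff_positive not_le
        of_nat_0_less_iff zero_less_Suc)
  then obtain y where y: "\<And>n. norm (y n) = 1" "\<And>n. \<rho> \<le> dist (y n) x" "\<And>n. \<rho> \<le> dist (y n) (- x)"
    "\<And>n. 1 - inverse (real (Suc n)) < norm (T (y n))"
    by metis
  have "norm T = 1"
    using assms(5) unfolding smooth_operator_def by auto
  then have "(\<lambda>n. norm (T (y n))) \<longlonglongrightarrow> 1"
    using tendsto_one_if_nearly_norming y(1,4) by blast
  then obtain r x1 where x1: "norm x1 = 1" "norm (T x1) = 1" and lim: "(\<lambda>n. y (r n)) \<longlonglongrightarrow> x1"
    using smooth_operator_maximizing_subseq_converges[where y=y, OF assms(1-5) y(1)] by blast
  then obtain n where "dist (y (r n)) x1 < \<rho>"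
    using \<open>\<rho> > 0\<close> unfolding LIMSEQ_def by blast
  moreover have "x1 = x \<or> x1 = - x"
    using smooth_operator_norm_attainment_pm[OF assms(2,3,5) x x1] .
  ultimately show False
    using y(2,3)[of "r n"] by auto
qed

section \<open>The hyperspace orthogonal to a smooth point\<close>

lemma bj_orth_self_imp_zero:
  assumes "bj_orth x x"
  shows "x = 0"
  using assms[unfolded bj_orth_def, rule_format, of "-1"] by simp

lemma bj_orth_scaleR_right:
  assumes "bj_orth x z"
  shows "bj_orth x (b *\<^sub>R z)"
  using assms unfolding bj_orth_def by (metis scaleR_scaleR)

lemma bj_orth_scaled_bound:
  assumes "bj_orth x h"
  shows "\<bar>s\<bar> * norm x \<le> norm (h + s *\<^sub>R x)"
proof (cases "s = 0")
  case False
  have "norm x \<le> norm (x + (1 / s) *\<^sub>R h)"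
    using assms unfolding bj_orth_def by blast
  moreover have "h + s *\<^sub>R x = s *\<^sub>R (x + (1 / s) *\<^sub>R h)"
    using False by (simp add: algebra_simps)
  ultimately show ?thesis
    by (simp add: mult_left_mono)
qed simp

lemma hyperspace_kernel:
  fixes f :: "'a::real_normed_vector \<Rightarrow>\<^sub>L real"
  assumes "f x \<noteq> 0"
  shows "hyperspace {y. f y = 0}"
  unfolding hyperspace_def
proof (intro conjI exI[of _ x])
  show "subspace {y. f y = 0}"
    by (simp add: subspace_def blinfun.add_right blinfun.scaleR_right)
  show "closed {y. f y = 0}"
    by (intro closed_Collect_eq continuous_intros)
  show "\<forall>y. \<exists>h\<in>{y. f y = 0}. \<exists>t. y = h + t *\<^sub>R x"
  proof
    fix y
    show "\<exists>h\<in>{y. f y = 0}. \<exists>t. y = h + t *\<^sub>R x"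
      using assms by (intro bexI[of _ "y - (f y / f x) *\<^sub>R x"] exI[of _ "f y / f x"])
        (auto simp: blinfun.diff_right blinfun.scaleR_right)
  qed
qed (use assms in simp)

lemma hyperspace_decomposition:
  assumes "hyperspace H" "x \<notin> H"
  obtains h s where "h \<in> H" "y = h + s *\<^sub>R x"
proof -
  obtain v where v: "\<And>y. \<exists>h\<in>H. \<exists>t::real. y = h + t *\<^sub>R v"
    using assms(1) unfolding hyperspace_def by blast
  have H: "subspace H"
    using assms(1) unfolding hyperspace_def by blast
  obtain h0 t0 where h0: "h0 \<in> H" "x = h0 + t0 *\<^sub>R v"
    using v by blast
  have "t0 \<noteq> 0"
    using h0 assms(2) by auto
  obtain h t where h: "h \<in> H" "y = h + t *\<^sub>R v"
    using v by blast
  have "y = (h - (t / t0) *\<^sub>R h0) + (t / t0) *\<^sub>R x"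
    using h(2) h0(2) \<open>t0 \<noteq> 0\<close> by (simp add: algebra_simps)
  moreover have "h - (t / t0) *\<^sub>R h0 \<in> H"
    using H h(1) h0(1) by (simp add: subspace_diff subspace_scale)
  ultimately show ?thesis
    using that by blast
qed

lemma subspace_separating_linear_functional:
  fixes x :: "'a::real_vector"
  assumes "subspace H" "x \<notin> H"
  obtains g :: "'a \<Rightarrow> real" where "linear g" "g x = 1" "\<And>h. h \<in> H \<Longrightarrow> g h = 0"
proof -
  obtain B where B: "B \<subseteq> H" "independent B" "H \<subseteq> span B"
    by (rule maximal_independent_subset)
  have "x \<notin> span B"
    using assms(2) span_minimal[OF B(1) assms(1)] by blast
  then have "independent (insert x B)"
    using B(2) by (rule independent_insertI)
  then obtain g :: "'a \<Rightarrow> real" where g: "linear g" "\<forall>b\<in>insert x B. g b = (if b = x then 1 else 0)"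
    using linear_independent_extend[of "insert x B" "\<lambda>b. if b = x then 1 else 0"] by blast
  have "g b = 0" if "b \<in> B" for b
    using g(2) B(1) assms(2) that by auto
  then have "g h = 0" if "h \<in> H" for h
    using real_vector.linear_eq_0_on_span[OF g(1)] B(3) that by blast
  with g show ?thesis
    using that by simp
qed

lemma bj_orth_hyperspace_functional:
  fixes x :: "'a::real_normed_vector"
  assumes "hyperspace H" "norm x = 1" "\<forall>h\<in>H. bj_orth x h"
  obtains g :: "'a \<Rightarrow>\<^sub>L real" where "norm g = 1" "g x = 1" "\<And>h. h \<in> H \<Longrightarrow> g h = 0"
proof -
  have H: "subspace H"
    using assms(1) unfolding hyperspace_def by blast
  have "x \<notin> H"
    using assms(2,3) bj_orth_self_imp_zero by force
  then obtain g :: "'a \<Rightarrow> real" where g: "linear g" "g x = 1" "\<And>h. h \<in> H \<Longrightarrow> g h = 0"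
    using subspace_separating_linear_functional[OF H] by blast
  have bound: "\<bar>g y\<bar> \<le> norm y" for y
  proof -
    obtain h s where "h \<in> H" "y = h + s *\<^sub>R x"
      using hyperspace_decomposition[OF assms(1) \<open>x \<notin> H\<close>] .
    moreover from this have "g y = s"
      using g by (simp add: linear_add linear_scale)
    ultimately show ?thesis
      using bj_orth_scaled_bound[of x h s] assms(2,3) by auto
  qed
  have "bounded_linear g"
    by (rule bounded_linear_intro[of _ 1]) (use g(1) bound in \<open>auto simp: linear_add linear_scale\<close>)
  then have apply_g: "Blinfun g y = g y" for y
    by (simp add: bounded_linear_Blinfun_apply)
  have "norm (Blinfun g) = 1"
  proof (rule antisym)
    show "norm (Blinfun g) \<le> 1"
      using bound by (intro norm_blinfun_bound) (auto simp: apply_g)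
    show "1 \<le> norm (Blinfun g)"
      using norm_blinfun[of "Blinfun g" x] g(2) assms(2) by (simp add: apply_g)
  qed
  with g show ?thesis
    using that[of "Blinfun g"] by (simp add: apply_g)
qed

lemma bj_orth_hyperspace_eq_kernel:
  fixes x :: "'a::real_normed_vector" and f :: "'a \<Rightarrow>\<^sub>L real"
  assumes "smooth_space TYPE('a)" "norm x = 1" "norm f = 1" "f x = 1"
    and "hyperspace H" "\<forall>h\<in>H. bj_orth x h"
  shows "H = {y. f y = 0}"
proof -
  obtain g :: "'a \<Rightarrow>\<^sub>L real" where g: "norm g = 1" "g x = 1" "\<And>h. h \<in> H \<Longrightarrow> g h = 0"
    using bj_orth_hyperspace_functional[OF assms(5,2,6)] by blast
  have "g = f"
    using smooth_space_support_functional_unique[OF assms(1,2) g(1,2) assms(3,4)] .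
  then have sub: "H \<subseteq> {y. f y = 0}"
    using g(3) by blast
  moreover have "y \<in> H" if "f y = 0" for y
  proof -
    have "x \<notin> H"
      using sub assms(4) by auto
    then obtain h s where "h \<in> H" "y = h + s *\<^sub>R x"
      using hyperspace_decomposition[OF assms(5)] by blast
    moreover from this have "s = 0"
      using sub that assms(4) by (auto simp: blinfun.add_right blinfun.scaleR_right)
    ultimately show ?thesis
      by simp
  qed
  ultimately show ?thesis
    by blast
qed

lemma smooth_space_unique_orthogonal_hyperspace:
  fixes x :: "'a::real_normed_vector"
  assumes "smooth_space TYPE('a)" "norm x = 1"
  shows "\<exists>!H. hyperspace H \<and> (\<forall>h\<in>H. bj_orth x h)"
proof -
  obtain f :: "'a \<Rightarrow>\<^sub>L real" where f: "norm f = 1" "f x = 1"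
    using smooth_space_support_functional[OF assms] .
  have "hyperspace {y. f y = 0}"
    using f by (intro hyperspace_kernel[of f x]) simp
  moreover have "\<forall>h\<in>{y. f y = 0}. bj_orth x h"
    using f assms(2) bj_orth_if_norming_functional[of f x] by simp
  ultimately show ?thesis
    using bj_orth_hyperspace_eq_kernel[OF assms(1,2) f] by blast
qed

lemma hyperspace_has_unit_vector:
  fixes H :: "'a::real_normed_vector set"
  assumes "dim_gt_one TYPE('a)" "hyperspace H"
  obtains h where "h \<in> H" "norm h = 1"
proof -
  have "\<exists>h\<in>H. h \<noteq> 0"
  proof (rule ccontr)
    assume "\<not> ?thesis"
    then have H: "H \<subseteq> {0}"
      by blast
    obtain v where "\<And>y. \<exists>h\<in>H. \<exists>t::real. y = h + t *\<^sub>R v"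
      using assms(2) unfolding hyperspace_def by blast
    then have "{u, w} \<subseteq> span {v}" for u w :: 'a
      using H by (fastforce simp: span_singleton)
    then have "independent {u, w} \<Longrightarrow> card {u, w} \<le> 1" for u w :: 'a
      using real_vector.independent_span_bound[of "{v}" "{u, w}"] by simp
    then show False
      using assms(1) unfolding dim_gt_one_def by fastforce
  qed
  then obtain h where "h \<in> H" "h \<noteq> 0"
    by blast
  then show ?thesis
    using that[of "h /\<^sub>R norm h"] assms(2) by (simp add: hyperspace_def subspace_scale)
qed

section \<open>Perturbing \<open>T\<close> along its orthogonal hyperspace\<close>

lemma bj_orth_image_of_kernel:
  fixes T :: "'a::real_normed_vector \<Rightarrow>\<^sub>L 'b::real_normed_vector" and f :: "'a \<Rightarrow>\<^sub>L real"
  assumes "smooth_space TYPE('a)" "smooth_space TYPE('b)" "norm T = 1"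
    and x: "norm x = 1" "norm (T x) = 1" and f: "norm f = 1" "f x = 1" and "f h = 0"
  shows "bj_orth (T x) (T h)"
proof -
  obtain g :: "'b \<Rightarrow>\<^sub>L real" where g: "norm g = 1" "g (T x) = 1"
    using smooth_space_support_functional[OF assms(2) x(2)] .
  have "norm (g o\<^sub>L T) = 1"
    using norm_blinfun_compose[of g T] norm_blinfun[of "g o\<^sub>L T" x] g assms(3) x(1) by simp
  then have "g o\<^sub>L T = f"
    using smooth_space_support_functional_unique[OF assms(1) x(1) _ _ f] g(2) by simp
  then have "g (T h) = 0"
    using assms(8) by (metis blinfun_apply_blinfun_compose)
  then show ?thesis
    using bj_orth_if_norming_functional[of g "T x" "T h"] g x(2) by simp
qed

lemma norm_on_upper_bound:
  fixes T :: "'a::real_normed_vector \<Rightarrow>\<^sub>L 'b::real_normed_vector"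
  assumes "subspace H" "h \<in> H"
  shows "norm (T h) \<le> norm_on H T * norm h"
proof (cases "h = 0")
  case False
  have "bdd_above {norm (T h) | h. h \<in> H \<and> norm h = 1}"
  proof (rule bdd_aboveI[of _ "norm T"])
    fix c
    assume "c \<in> {norm (T h) | h. h \<in> H \<and> norm h = 1}"
    then obtain h' where "c = norm (T h')" "norm h' = 1"
      by blast
    then show "c \<le> norm T"
      using norm_blinfun_apply_le_norm[of h' T] by simp
  qed
  moreover have "h /\<^sub>R norm h \<in> H"
    using assms by (simp add: subspace_scale)
  ultimately have "norm (T (h /\<^sub>R norm h)) \<le> norm_on H T"
    unfolding norm_on_def using False by (intro cSup_upper) auto
  with False show ?thesis
    by (simp add: blinfun.scaleR_right field_simps)
qed simp

lemma norm_on_pos_imp_nonzero: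
  fixes T :: "'a::real_normed_vector \<Rightarrow>\<^sub>L 'b::real_normed_vector"
  assumes "h \<in> H" "norm h = 1" "0 < norm_on H T"
  obtains h' where "h' \<in> H" "T h' \<noteq> 0"
proof (rule ccontr)
  assume "\<not> thesis"
  then have "T h' = 0" if "h' \<in> H" for h'
    using that \<open>\<And>h'. h' \<in> H \<Longrightarrow> T h' \<noteq> 0 \<Longrightarrow> thesis\<close> by blast
  then have "{norm (T h) | h. h \<in> H \<and> norm h = 1} = {0}"
    using assms(1,2) by force
  with assms(3) show False
    by (simp add: norm_on_def)
qed

lemma CPP_smaller_multiplier:
  assumes "CPP x v r \<mu>" "norm z = 1" "bj_orth x z" "norm w = 1" "bj_orth v w"
    and "dist (a *\<^sub>R x + b *\<^sub>R z) x < r" "norm (a *\<^sub>R x + b *\<^sub>R z) = 1"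
    and "0 \<le> c" "c \<le> \<mu>"
  shows "norm (a *\<^sub>R v + (b * c) *\<^sub>R w) \<le> 1"
proof -
  have x: "norm x = 1" and v: "norm v = 1" and "\<mu> > 0"
    and cpp: "norm (a *\<^sub>R v + (b * \<mu>) *\<^sub>R w) \<le> 1"
    using assms unfolding CPP_def by blast+
  have "\<bar>a\<bar> \<le> 1"
    using bj_orth_scaled_bound[OF bj_orth_scaleR_right[OF assms(3)], of a b] x assms(7)
    by (simp add: add.commute)
  define \<theta> where "\<theta> = c / \<mu>"
  have \<theta>: "0 \<le> \<theta>" "\<theta> \<le> 1"
    using assms(8,9) \<open>\<mu> > 0\<close> by (auto simp: \<theta>_def)
  have "a *\<^sub>R v + (b * c) *\<^sub>R w = (1 - \<theta>) *\<^sub>R (a *\<^sub>R v) + \<theta> *\<^sub>R (a *\<^sub>R v + (b * \<mu>) *\<^sub>R w)"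
    using \<open>\<mu> > 0\<close> by (simp add: \<theta>_def algebra_simps)
  also have "norm \<dots> \<le> norm ((1 - \<theta>) *\<^sub>R (a *\<^sub>R v)) + norm (\<theta> *\<^sub>R (a *\<^sub>R v + (b * \<mu>) *\<^sub>R w))"
    by (rule norm_triangle_ineq)
  also have "\<dots> = (1 - \<theta>) * norm (a *\<^sub>R v) + \<theta> * norm (a *\<^sub>R v + (b * \<mu>) *\<^sub>R w)"
    using \<theta> by (simp only: norm_scaleR abs_of_nonneg diff_ge_0_iff_ge)
  also have "\<dots> \<le> (1 - \<theta>) * 1 + \<theta> * 1"
    using \<theta> \<open>\<bar>a\<bar> \<le> 1\<close> v cpp by (intro add_mono mult_left_mono) auto
  finally show ?thesis
    by simp
qed

lemma perturbation_bound_near_attainment: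
  fixes T :: "'a::real_normed_vector \<Rightarrow>\<^sub>L 'b::real_normed_vector" and f :: "'a \<Rightarrow>\<^sub>L real"
  assumes cpp: "CPP x (T x) r \<mu>" and f: "norm f = 1" "f x = 1"
    and orth: "\<And>h. f h = 0 \<Longrightarrow> bj_orth (T x) (T h)"
    and bound: "\<And>h. f h = 0 \<Longrightarrow> norm (T h) \<le> s * norm h"
    and l: "0 \<le> l" "l * s \<le> \<mu>" and y: "norm y = 1" "dist y x < r"
  shows "norm (f y *\<^sub>R T x + l *\<^sub>R T (y - f y *\<^sub>R x)) \<le> 1"
proof -
  define h where "h = y - f y *\<^sub>R x"
  have fh: "f h = 0"
    using f(2) by (simp add: h_def blinfun.diff_right blinfun.scaleR_right)
  have x: "norm x = 1" "norm (T x) = 1"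
    using cpp unfolding CPP_def by auto
  show ?thesis
  proof (cases "T h = 0")
    case True
    then show ?thesis
      using abs_blinfun_apply_le[of f y] f x y(1) by (simp add: h_def)
  next
    case False
    define z where "z = h /\<^sub>R norm h"
    define c where "c = norm (T z)"
    define w where "w = T z /\<^sub>R c"
    have "h \<noteq> 0"
      using False by auto
    then have z: "norm z = 1" "h = norm h *\<^sub>R z" "f z = 0"
      using fh by (simp_all add: z_def blinfun.scaleR_right)
    have Th: "T h = norm h *\<^sub>R T z"
      using z(2) by (metis blinfun.scaleR_right)
    then have "c \<noteq> 0"
      using False by (auto simp: c_def)
    then have w: "norm w = 1" "T h = (norm h * c) *\<^sub>R w"
      using Th by (simp_all add: w_def c_def)
    have "bj_orth (T x) w"
      using orth[of "z /\<^sub>R c"] z(3) by (simp add: w_def blinfun.scaleR_right)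
    moreover have "bj_orth x z"
      using bj_orth_if_norming_functional[of f x z] f x z(3) by simp
    moreover have "y = f y *\<^sub>R x + norm h *\<^sub>R z"
      using z(2) by (simp add: h_def)
    moreover have "0 \<le> l * c" "l * c \<le> \<mu>"
      using bound[OF z(3)] z(1) l mult_left_mono[of c s l] by (auto simp: c_def)
    ultimately have "norm (f y *\<^sub>R T x + (norm h * (l * c)) *\<^sub>R w) \<le> 1"
      using CPP_smaller_multiplier[OF cpp z(1) _ w(1)] y by metis
    with w(2) show ?thesis
      by (simp add: h_def mult.left_commute)
  qed
qed

lemma perturbation_norm_le_one:
  fixes T :: "'a::real_normed_vector \<Rightarrow>\<^sub>L 'b::real_normed_vector" and f :: "'a \<Rightarrow>\<^sub>L real"
  assumes cpp: "CPP x (T x) r \<mu>" and "norm T = 1" and f: "norm f = 1" "f x = 1"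
    and orth: "\<And>h. f h = 0 \<Longrightarrow> bj_orth (T x) (T h)"
    and bound: "\<And>h. f h = 0 \<Longrightarrow> norm (T h) \<le> s * norm h"
    and gap: "\<And>y. norm y = 1 \<Longrightarrow> r \<le> dist y x \<Longrightarrow> r \<le> dist y (- x) \<Longrightarrow> norm (T y) \<le> 1 - \<eta>"
    and t: "\<bar>t\<bar> \<le> 1" "2 * \<bar>t\<bar> \<le> \<eta>" "(1 + t) * s \<le> \<mu>"
  shows "norm (T + t *\<^sub>R (T o\<^sub>L (id_blinfun - (blinfun_scaleR_left x o\<^sub>L f)))) \<le> 1"
    (is "norm ?S \<le> 1")
proof (rule norm_blinfun_le_if_unit_bound)
  have S: "?S y = T y + t *\<^sub>R T (y - f y *\<^sub>R x)" for y
    by (simp add: blinfun.add_left blinfun.diff_left blinfun.scaleR_left)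
  have near: "norm (?S y) \<le> 1" if "norm y = 1" "dist y x < r" for y
  proof -
    have "?S y = f y *\<^sub>R T x + (1 + t) *\<^sub>R T (y - f y *\<^sub>R x)"
      unfolding S by (simp add: blinfun.diff_right blinfun.scaleR_right algebra_simps)
    then show ?thesis
      using perturbation_bound_near_attainment[OF cpp f orth bound _ t(3) that] t(1) by simp
  qed
  fix y :: 'a
  assume y: "norm y = 1"
  consider "dist y x < r" | "dist (- y) x < r" | "r \<le> dist y x" "r \<le> dist y (- x)"
    by (metis dist_minus minus_minus not_le)
  then show "norm (?S y) \<le> 1"
  proof cases
    case 2
    then show ?thesis
      using near[of "- y"] y by (simp add: blinfun.minus_right)
  next
    case 3
    have "norm x = 1"
      using cpp unfolding CPP_def by simp
    then have "norm (y - f y *\<^sub>R x) \<le> 2"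
      using norm_triangle_ineq4[of y "f y *\<^sub>R x"] abs_blinfun_apply_le[of f y] f y by simp
    then have "norm (T (y - f y *\<^sub>R x)) \<le> 2"
      using norm_blinfun[of T "y - f y *\<^sub>R x"] assms(2) by simp
    have "norm (?S y) \<le> norm (T y) + \<bar>t\<bar> * norm (T (y - f y *\<^sub>R x))"
      unfolding S using norm_triangle_ineq[of "T y" "t *\<^sub>R T (y - f y *\<^sub>R x)"] by simp
    also have "\<dots> \<le> (1 - \<eta>) + \<bar>t\<bar> * 2"
      using gap[OF y 3] \<open>norm (T (y - f y *\<^sub>R x)) \<le> 2\<close> by (intro add_mono mult_left_mono) auto
    finally show ?thesis
      using t(2) by simp
  qed (use near y in blast)
qed simp

lemma not_extreme_point_of_cball:
  fixes A D :: "'a::real_normed_vector"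
  assumes "D \<noteq> 0" "\<delta> > 0" "norm (A + \<delta> *\<^sub>R D) \<le> 1" "norm (A - \<delta> *\<^sub>R D) \<le> 1"
  shows "\<not> A extreme_point_of cball 0 1"
proof -
  have "(A + \<delta> *\<^sub>R D) - (A - \<delta> *\<^sub>R D) = (2 * \<delta>) *\<^sub>R D"
    by (simp add: algebra_simps scaleR_2 flip: scaleR_scaleR)
  then have "A - \<delta> *\<^sub>R D \<noteq> A + \<delta> *\<^sub>R D"
    using assms(1,2) by (metis diff_self mult_pos_pos scaleR_eq_0_iff zero_less_numeral less_irrefl)
  moreover have "A = (1 - 1/2) *\<^sub>R (A - \<delta> *\<^sub>R D) + (1/2) *\<^sub>R (A + \<delta> *\<^sub>R D)"
    by (simp add: algebra_simps flip: scaleR_add_left)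
  ultimately have "A \<in> open_segment (A - \<delta> *\<^sub>R D) (A + \<delta> *\<^sub>R D)"
    unfolding in_segment by (intro conjI exI[of _ "1/2"]) auto
  moreover have "A - \<delta> *\<^sub>R D \<in> cball 0 1" "A + \<delta> *\<^sub>R D \<in> cball 0 1"
    using assms(3,4) by simp_all
  ultimately show ?thesis
    unfolding extreme_point_of_def by blast
qed

lemma perturbation_contractive:
  fixes T :: "'a::real_normed_vector \<Rightarrow>\<^sub>L 'b::real_normed_vector" and f :: "'a \<Rightarrow>\<^sub>L real"
  assumes cpp: "CPP x (T x) r \<mu>" and T: "norm T = 1" and f: "norm f = 1" "f x = 1"
    and orth: "\<And>h. f h = 0 \<Longrightarrow> bj_orth (T x) (T h)"
    and bound: "\<And>h. f h = 0 \<Longrightarrow> norm (T h) \<le> s * norm h"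
    and gap: "\<And>y. norm y = 1 \<Longrightarrow> r \<le> dist y x \<Longrightarrow> r \<le> dist y (- x) \<Longrightarrow> norm (T y) \<le> 1 - \<eta>"
    and "\<eta> > 0" "0 < s" "s < \<mu>"
  defines "D \<equiv> T o\<^sub>L (id_blinfun - (blinfun_scaleR_left x o\<^sub>L f))"
  obtains \<delta> where "\<delta> > 0" "norm (T + \<delta> *\<^sub>R D) \<le> 1" "norm (T - \<delta> *\<^sub>R D) \<le> 1"
proof -
  define \<delta> where "\<delta> = min (\<eta> / 2) (min (\<mu> / s - 1) 1)"
  have "\<delta> > 0"
    using assms(8-10) by (auto simp: \<delta>_def field_simps)
  have "(1 + \<delta>) * s \<le> (1 + (\<mu> / s - 1)) * s"
    using \<open>s > 0\<close> by (intro mult_right_mono) (auto simp: \<delta>_def)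
  then have \<delta>_le: "(1 + \<delta>) * s \<le> \<mu>"
    using \<open>s > 0\<close> by simp
  have "norm (T + t *\<^sub>R D) \<le> 1" if "\<bar>t\<bar> \<le> \<delta>" for t
  proof -
    have "(1 + t) * s \<le> (1 + \<delta>) * s"
      using that \<open>s > 0\<close> by (intro mult_right_mono) auto
    moreover have "\<bar>t\<bar> \<le> 1" "2 * \<bar>t\<bar> \<le> \<eta>"
      using that by (auto simp: \<delta>_def)
    ultimately show ?thesis
      unfolding D_def using \<delta>_le by (intro perturbation_norm_le_one[OF cpp T f orth bound gap]) auto
  qed
  from this[of \<delta>] this[of "- \<delta>"] \<open>\<delta> > 0\<close> show ?thesis
    using that by simp
qed

lemma not_extreme_contraction_if_CPP:
  fixes T :: "'a::real_normed_vector \<Rightarrow>\<^sub>L 'b::real_normed_vector"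
  assumes "reflexive_space TYPE('a)" "smooth_space TYPE('a)" "smooth_space TYPE('b)"
    and "kadets_klee TYPE('a)" "dim_gt_one TYPE('a)" "smooth_operator T"
    and x: "norm x = 1" "norm (T x) = 1" and H: "hyperspace H" "\<forall>h\<in>H. bj_orth x h"
    and cpp: "CPP x (T x) r \<mu>" and s: "0 < norm_on H T" "norm_on H T < \<mu>"
  shows "\<not> extreme_contraction T"
proof -
  have T: "norm T = 1"
    using assms(6) unfolding smooth_operator_def by auto
  obtain f :: "'a \<Rightarrow>\<^sub>L real" where f: "norm f = 1" "f x = 1"
    using smooth_space_support_functional[OF assms(2) x(1)] .
  have H_eq: "H = {y. f y = 0}"
    using bj_orth_hyperspace_eq_kernel[OF assms(2) x(1) f H] .
  have bound: "norm (T h) \<le> norm_on H T * norm h" if "f h = 0" for h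
    using norm_on_upper_bound H(1) H_eq that unfolding hyperspace_def by blast
  obtain \<eta> where \<eta>: "\<eta> > 0"
    "\<And>y. norm y = 1 \<Longrightarrow> r \<le> dist y x \<Longrightarrow> r \<le> dist y (- x) \<Longrightarrow> norm (T y) \<le> 1 - \<eta>"
    using smooth_operator_norm_gap[OF assms(1-4,6) x, of r] cpp unfolding CPP_def by blast
  define D where "D = T o\<^sub>L (id_blinfun - (blinfun_scaleR_left x o\<^sub>L f))"
  obtain h where "h \<in> H" "norm h = 1"
    using hyperspace_has_unit_vector[OF assms(5) H(1)] .
  then obtain h' where "f h' = 0" "T h' \<noteq> 0"
    using norm_on_pos_imp_nonzero[of h H T] s(1) H_eq by blast
  then have "D h' \<noteq> 0"
    by (simp add: D_def blinfun.diff_left)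
  then have "D \<noteq> 0"
    by auto
  moreover obtain \<delta> where "\<delta> > 0" "norm (T + \<delta> *\<^sub>R D) \<le> 1" "norm (T - \<delta> *\<^sub>R D) \<le> 1"
    using perturbation_contractive[OF cpp T f bj_orth_image_of_kernel[OF assms(2,3) T x f]
        bound \<eta>(2,1) s] unfolding D_def by blast
  ultimately have "\<not> T extreme_point_of cball 0 1"
    using not_extreme_point_of_cball by blast
  then show ?thesis
    unfolding extreme_contraction_def by blast
qed

theorem mainTheorem17:
  fixes T :: "'a::banach \<Rightarrow>\<^sub>L 'b::banach"
  assumes "dim_gt_one TYPE('a)" and "dim_gt_one TYPE('b)"
    and "smooth_space TYPE('a)" and "reflexive_space TYPE('a)" and "kadets_klee TYPE('a)"
    and "smooth_space TYPE('b)"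
    and "compact_op T" and "norm T = 1" and "smooth_operator T"
  shows "(\<exists>x. norm x = 1 \<and> norm_attainment_set T = {x, - x}) \<and>
    (\<forall>x \<in> norm_attainment_set T.
       (\<exists>!H. hyperspace H \<and> (\<forall>h\<in>H. bj_orth x h)) \<and>
       (\<forall>H r \<mu>. hyperspace H \<and> (\<forall>h\<in>H. bj_orth x h) \<and> CPP x (blinfun_apply T x) r \<mu> \<and>
          0 < norm_on H T \<and> norm_on H T < \<mu> \<longrightarrow> \<not> extreme_contraction T))"
proof (intro conjI ballI allI impI)
  obtain x where "norm x = 1" "norm (T x) = 1"
    using compact_op_attains_norm[OF assms(4,3,6-8)] .
  then show "\<exists>x. norm x = 1 \<and> norm_attainment_set T = {x, - x}"
    using smooth_operator_norm_attainment_set[OF assms(3,6,9)] by blast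
next
  fix x
  assume "x \<in> norm_attainment_set T"
  then have x: "norm x = 1" "norm (T x) = 1"
    using assms(8) by (simp_all add: norm_attainment_set_def)
  then show "\<exists>!H. hyperspace H \<and> (\<forall>h\<in>H. bj_orth x h)"
    using smooth_space_unique_orthogonal_hyperspace[OF assms(3)] by blast
  fix H r \<mu>
  assume "hyperspace H \<and> (\<forall>h\<in>H. bj_orth x h) \<and> CPP x (T x) r \<mu> \<and>
    0 < norm_on H T \<and> norm_on H T < \<mu>"
  then show "\<not> extreme_contraction T"
    using not_extreme_contraction_if_CPP[OF assms(4,3,6,5,1,9) x] by blast
qed

end
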